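(* Let $(X,V)=(X(t),V(t))_{t\ge0}$ be the global solution of the continuous Motsch–Tadmor model and, for each admissible time-step $h>0$, let $(X^h,V^h)=(X^h(n),V^h(n))_{n\ge0}$ be the solution of the discrete Motsch–Tadmor model with time-step $h$, both with the same initial data $(X^h(0),V^h(0))=(X(0),V(0))$ (all as described in the context, under the standing assumptions there). Assume that $\mathcal{D}(V(0))\le \kappa\int_{\mathcal{D}(X(0))}^{\infty} a(s)\,ds$, and that \[ \|\Delta^x(0)\|_F<M \quad\text{and}\quad \|\Delta^v(0)\|_F<\kappa\int_{\|\Delta^x(0)\|_F}^{M}\psi(s)\,ds . \] Then there is a constant $c_0=c_0(\kappa,N,a)$, independent of $n$ and $h$, such that \[ \limsup_{h\to0}\ \sup_{0\le n<\infty}\|\Delta^{x,h}(n)-\Delta^x(nh)\|_F\le c_0\,\mathcal{D}(V(0)),\qquad \limsup_{h\to0}\ \sup_{0\le n<\infty}\|V^h(n)-V(nh)\|=0 . \]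
   Context: Fix integers $N\ge1$, $d\ge1$, coupling strength $\kappa>0$ and a communication function $a:[0,\infty)\to\mathbb{R}$ with constants $0<c_1\le c_2$ such that $c_1\le a(r)\le c_2$ for all $r\ge0$ and $a$ Lipschitz with constant $L_a>0$. Time-steps are always taken with $0<h<\min\{1,1/\kappa\}$. Continuous MT model: $\dot x_i=v_i$, $\dot v_i=\kappa\sum_{j=1}^N\phi_{ij}(v_j-v_i)$, $i=1,\dots,N$, with $\phi_{ij}=\frac{a(\|x_i-x_j\|)}{\sum_{k=1}^N a(\|x_i-x_k\|)}$ ($\|\cdot\|$ Euclidean on $\mathbb{R}^d$). Discrete MT model with step $h$: $x^h_i(n+1)=x^h_i(n)+hv^h_i(n)$, $v^h_i(n+1)=v^h_i(n)+h\kappa\sum_{j=1}^N\phi^h_{ij}(n)(v^h_j(n)-v^h_i(n))$, with $\phi^h_{ij}(n)=\frac{a(\|x^h_i(n)-x^h_j(n)\|)}{\sum_k a(\|x^h_i(n)-x^h_k(n)\|)}$. Notation: $X=(x_1,\dots,x_N)$, $V=(v_1,\dots,v_N)$, $\|V\|$ the Euclidean norm on $(\mathbb{R}^d)^N$; $\mathcal{D}(X)=\max_{i,j}\|x_i-x_j\|$, $\mathcal{D}(V)=\max_{i,j}\|v_i-v_j\|$; $\Delta^x_{ij}=x_i-x_j$, $\Delta^v_{ij}=v_i-v_j$, $\|\Delta^x\|_F=(\sum_{i,j}\|\Delta^x_{ij}\|^2)^{1/2}$, $\|\Delta^v\|_F$ likewise; $\Delta^{x,h}(n)$ is the matrix $[x^h_i(n)-x^h_j(n)]$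 and $\Delta^x(nh)$ is $[x_i(nh)-x_j(nh)]$. Constants: $\|\phi\|_{\mathrm{Lip}}=\frac{L_a}{Nc_1}(1+\frac{c_2}{c_1})$, $M=\frac{1}{4N\|\phi\|_{\mathrm{Lip}}}$, $\psi(s)=1-\|\phi\|_{\mathrm{Lip}}Ns$. *)

theory Defs
  imports "HOL-Analysis.Analysis"
begin

text \<open>Agents are indexed by i < N; configurations are functions nat => 'v,
  where 'v is Euclidean space R^d (d = DIM('v) >= 1). Values at indices >= N are irrelevant.\<close>

definition mt_phi :: "nat \<Rightarrow> (real \<Rightarrow> real) \<Rightarrow> (nat \<Rightarrow> 'v::euclidean_space) \<Rightarrow> nat \<Rightarrow> nat \<Rightarrow> real" where
  "mt_phi N a X i j = a (norm (X i - X j)) / (\<Sum>k<N. a (norm (X i - X k)))"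

definition mt_force :: "nat \<Rightarrow> real \<Rightarrow> (real \<Rightarrow> real) \<Rightarrow> (nat \<Rightarrow> 'v::euclidean_space) \<Rightarrow> (nat \<Rightarrow> 'v) \<Rightarrow> nat \<Rightarrow> 'v" where
  "mt_force N \<kappa> a X V i = \<kappa> *\<^sub>R (\<Sum>j<N. mt_phi N a X i j *\<^sub>R (V j - V i))"

primrec mt_disc :: "nat \<Rightarrow> real \<Rightarrow> (real \<Rightarrow> real) \<Rightarrow> real \<Rightarrow> (nat \<Rightarrow> 'v::euclidean_space) \<Rightarrow> (nat \<Rightarrow> 'v)
    \<Rightarrow> nat \<Rightarrow> (nat \<Rightarrow> 'v) \<times> (nat \<Rightarrow> 'v)" where
  "mt_disc N \<kappa> a h X0 V0 0 = (X0, V0)"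
| "mt_disc N \<kappa> a h X0 V0 (Suc n) =
     (let (X, V) = mt_disc N \<kappa> a h X0 V0 n
      in (\<lambda>i. X i + h *\<^sub>R V i, \<lambda>i. V i + h *\<^sub>R mt_force N \<kappa> a X V i))"

definition diam :: "nat \<Rightarrow> (nat \<Rightarrow> 'v::euclidean_space) \<Rightarrow> real" where
  "diam N X = Max {norm (X i - X j) | i j. i < N \<and> j < N}"

definition frob :: "nat \<Rightarrow> (nat \<Rightarrow> nat \<Rightarrow> 'v::euclidean_space) \<Rightarrow> real" where
  "frob N D = sqrt (\<Sum>i<N. \<Sum>j<N. (norm (D i j))\<^sup>2)"

definition delta :: "(nat \<Rightarrow> 'v::euclidean_space) \<Rightarrow> nat \<Rightarrow> nat \<Rightarrow> 'v" where
  "delta X i j = X i - X j"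

definition cnorm :: "nat \<Rightarrow> (nat \<Rightarrow> 'v::euclidean_space) \<Rightarrow> real" where
  "cnorm N V = sqrt (\<Sum>i<N. (norm (V i))\<^sup>2)"

definition phi_lip :: "nat \<Rightarrow> real \<Rightarrow> real \<Rightarrow> real \<Rightarrow> real" where
  "phi_lip N La c1 c2 = La / (real N * c1) * (1 + c2 / c1)"

definition M_const :: "nat \<Rightarrow> real \<Rightarrow> real \<Rightarrow> real \<Rightarrow> real" where
  "M_const N La c1 c2 = 1 / (4 * real N * phi_lip N La c1 c2)"

definition psi :: "nat \<Rightarrow> real \<Rightarrow> real \<Rightarrow> real \<Rightarrow> real \<Rightarrow> real" where
  "psi N La c1 c2 s = 1 - phi_lip N La c1 c2 * real N * s"

end

theory Submission
  imports Defs
begin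

text \<open>Since a \<ge> c1 > 0, every weight \<phi>_ij is at least c1/(N c2). One explicit Euler step
  replaces each velocity by a convex combination of itself and a \<phi>-average of all velocities,
  and two such averages share the mass c1/c2; so every step shrinks the velocity diameter by the
  factor 1 - h\<kappa>c1/c2, whatever the positions. Summing the geometric series, discrete velocities
  move by at most (c2/c1) D(V(0)) and relative positions by at most (c2/(\<kappa>c1)) D(V(0)), for all
  n and h. The Euler scheme converges on bounded time intervals, so along the steps t/m these
  bounds pass to the continuous flow; this gives the position estimate with c0 = 2Nc2/(\<kappa>c1).
  For the velocities, the Euler error is small on a long but finite window [0, T], and after T
  both the discrete and the continuous velocities move by an exponentially small amount only.\<close>

lemma norm_diff_le_of_vector_derivative_bound:
  fixes f :: "real \<Rightarrow> 'a::real_normed_vector"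
  assumes "a \<le> b"
    and "\<And>s. s \<in> {a..b} \<Longrightarrow> (f has_vector_derivative f' s) (at s within {a..b})"
    and "\<And>s. s \<in> {a..b} \<Longrightarrow> norm (f' s) \<le> B"
  shows "norm (f b - f a) \<le> B * (b - a)"
proof -
  have "norm (f b - f a) \<le> B * norm (b - a)"
  proof (rule differentiable_bound[where S="{a..b}" and f'="\<lambda>s h. h *\<^sub>R f' s"])
    fix s assume s: "s \<in> {a..b}"
    show "(f has_derivative (\<lambda>h. h *\<^sub>R f' s)) (at s within {a..b})"
      using assms(2)[OF s] by (simp add: has_vector_derivative_def)
    show "onorm (\<lambda>h::real. h *\<^sub>R f' s) \<le> B"
      using assms(3)[OF s] by (simp add: onorm_scaleR_left[OF bounded_linear_ident] onorm_id)
  qed (use assms(1) in auto)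
  with assms(1) show ?thesis by simp
qed

lemma norm_first_order_remainder_le:
  fixes f :: "real \<Rightarrow> 'a::real_normed_vector"
  assumes "0 \<le> h" "0 \<le> K"
    and "\<And>s. s \<in> {t..t + h} \<Longrightarrow> (f has_vector_derivative f' s) (at s within {t..t + h})"
    and "\<And>s. s \<in> {t..t + h} \<Longrightarrow> norm (f' s - f' t) \<le> K * (s - t)"
  shows "norm (f (t + h) - f t - h *\<^sub>R f' t) \<le> K * h\<^sup>2"
proof -
  have "norm (f' s - f' t) \<le> K * h" if "s \<in> {t..t + h}" for s
    using assms(2) assms(4)[OF that] that by (smt (verit) atLeastAtMost_iff mult_left_mono)
  then have "norm (f (t + h) - f t - ((t + h) - t) *\<^sub>R f' t) \<le> norm ((t + h) - t) * (K * h)"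
    using assms(1,3) closed_segment_eq_real_ivl[of t "t + h"]
    by (intro vector_differentiable_bound_linearization[where S="{t..t + h}"]) auto
  with assms(1) show ?thesis
    by (simp add: power2_eq_square mult.commute mult.left_commute)
qed

lemma norm_euler_step_error_le:
  fixes X V F x v F' x' v' :: "'a::real_normed_vector"
  assumes "0 \<le> h"
  shows "norm (X + h *\<^sub>R V - x') + norm (V + h *\<^sub>R F - v')
    \<le> norm (X - x) + norm (V - v) + h * (norm (V - v) + norm (F - F'))
      + (norm (x' - x - h *\<^sub>R v) + norm (v' - v - h *\<^sub>R F'))"
proof -
  have "norm (X + h *\<^sub>R V - x') = norm ((X - x) + h *\<^sub>R (V - v) - (x' - x - h *\<^sub>R v))"
    by (simp add: algebra_simps)
  also have "\<dots> \<le> norm (X - x) + h * norm (V - v) + norm (x' - x - h *\<^sub>R v)"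
    using assms by (intro order_trans[OF norm_triangle_ineq4] add_right_mono
        order_trans[OF norm_triangle_ineq]) simp_all
  finally have x_part: "norm (X + h *\<^sub>R V - x') \<le> norm (X - x) + h * norm (V - v) + norm (x' - x - h *\<^sub>R v)" .
  have "norm (V + h *\<^sub>R F - v') = norm ((V - v) + h *\<^sub>R (F - F') - (v' - v - h *\<^sub>R F'))"
    by (simp add: algebra_simps)
  also have "\<dots> \<le> norm (V - v) + h * norm (F - F') + norm (v' - v - h *\<^sub>R F')"
    using assms by (intro order_trans[OF norm_triangle_ineq4] add_right_mono
        order_trans[OF norm_triangle_ineq]) simp_all
  finally show ?thesis
    using x_part by (simp add: algebra_simps)
qed

lemma abs_divide_diff_le:
  fixes A A' S S' c :: real
  assumes "0 < c" "c \<le> S" "c \<le> S'" "0 \<le> A'"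
  shows "\<bar>A / S - A' / S'\<bar> \<le> \<bar>A - A'\<bar> / c + A' * \<bar>S - S'\<bar> / c\<^sup>2"
proof -
  have "A / S - A' / S' = (A - A') / S + A' * (S' - S) / (S * S')"
    using assms by (simp add: field_simps)
  moreover have "\<bar>(A - A') / S\<bar> \<le> \<bar>A - A'\<bar> / c"
    using assms by (simp add: abs_divide frac_le)
  moreover have "\<bar>A' * (S' - S) / (S * S')\<bar> \<le> A' * \<bar>S - S'\<bar> / c\<^sup>2"
    using assms by (simp add: abs_divide abs_mult abs_minus_commute power2_eq_square frac_le mult_mono)
  ultimately show ?thesis
    by (smt (verit))
qed

text \<open>Two averages of the same points whose weights are all at least \<mu> share the mass \<mu> at
  every point; only the remaining mass 1 - N\<mu> of each can be placed differently.\<close>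
lemma norm_diff_weighted_sums_le:
  fixes V :: "nat \<Rightarrow> 'a::real_normed_vector"
  assumes p: "\<And>j. j < N \<Longrightarrow> \<mu> \<le> p j" and q: "\<And>j. j < N \<Longrightarrow> \<mu> \<le> q j"
    and sum_p: "(\<Sum>j<N. p j) = 1" and sum_q: "(\<Sum>j<N. q j) = 1"
    and D: "\<And>j l. j < N \<Longrightarrow> l < N \<Longrightarrow> norm (V j - V l) \<le> D"
  shows "norm ((\<Sum>j<N. p j *\<^sub>R V j) - (\<Sum>j<N. q j *\<^sub>R V j)) \<le> (1 - real N * \<mu>) * D"
proof -
  define s where "s = 1 - real N * \<mu>"
  define p' where "p' j = p j - \<mu>" for j
  define q' where "q' j = q j - \<mu>" for j
  have p'_nonneg: "\<And>j. j < N \<Longrightarrow> 0 \<le> p' j" and q'_nonneg: "\<And>j. j < N \<Longrightarrow> 0 \<le> q' j"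
    using p q by (auto simp: p'_def q'_def)
  have sum_p': "(\<Sum>j<N. p' j) = s" and sum_q': "(\<Sum>j<N. q' j) = s"
    using sum_p sum_q by (simp_all add: p'_def q'_def s_def sum_subtractf)
  have s_nonneg: "0 \<le> s"
    using sum_p' p'_nonneg by (metis sum_nonneg lessThan_iff)
  define w where "w = (\<Sum>j<N. p' j *\<^sub>R V j) - (\<Sum>l<N. q' l *\<^sub>R V l)"
  have diff_eq_w: "(\<Sum>j<N. p j *\<^sub>R V j) - (\<Sum>j<N. q j *\<^sub>R V j) = w"
    by (simp add: w_def p'_def q'_def scaleR_diff_left sum_subtractf)
  have "(\<Sum>j<N. \<Sum>l<N. (p' j * q' l) *\<^sub>R V j) = s *\<^sub>R (\<Sum>j<N. p' j *\<^sub>R V j)"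
    by (simp add: scaleR_sum_left[symmetric] sum_distrib_left[symmetric] sum_q' scaleR_sum_right
        mult.commute)
  moreover have "(\<Sum>j<N. \<Sum>l<N. (p' j * q' l) *\<^sub>R V l) = s *\<^sub>R (\<Sum>l<N. q' l *\<^sub>R V l)"
    by (subst sum.swap) (simp add: scaleR_sum_left[symmetric] sum_distrib_right[symmetric] sum_p'
        scaleR_sum_right)
  ultimately have "s *\<^sub>R w = (\<Sum>j<N. \<Sum>l<N. (p' j * q' l) *\<^sub>R (V j - V l))"
    by (simp add: w_def scaleR_diff_right sum_subtractf)
  then have "norm (s *\<^sub>R w) \<le> (\<Sum>j<N. \<Sum>l<N. (p' j * q' l) * D)"
    by (auto simp: p'_nonneg q'_nonneg D intro!: order_trans[OF norm_sum] sum_mono mult_left_mono)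
  also have "\<dots> = s * (s * D)"
    by (simp add: sum_distrib_right[symmetric] sum_distrib_left[symmetric] sum_p' sum_q')
  finally have "s * norm w \<le> s * (s * D)"
    using s_nonneg by simp
  moreover have "w = 0" if "s = 0"
  proof -
    have "\<forall>j\<in>{..<N}. p' j = 0" "\<forall>j\<in>{..<N}. q' j = 0"
      using that sum_p' sum_q' p'_nonneg q'_nonneg
        sum_nonneg_eq_0_iff[of "{..<N}" p'] sum_nonneg_eq_0_iff[of "{..<N}" q'] by auto
    then show ?thesis by (simp add: w_def)
  qed
  ultimately show ?thesis
    using s_nonneg diff_eq_w by (cases "s = 0") (auto simp: s_def mult_le_cancel_left)
qed

lemma discrete_gronwall:
  fixes e :: "nat \<Rightarrow> real"
  assumes "e 0 = 0" "0 \<le> q" "0 \<le> c"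
    and "\<And>k. k < n \<Longrightarrow> e (Suc k) \<le> (1 + q) * e k + c"
  shows "e n \<le> real n * c * exp (real n * q)"
  using assms(4)
proof (induction n)
  case 0
  then show ?case using assms(1) by simp
next
  case (Suc n)
  define B where "B = real n * c * exp (real n * q)"
  have "(1 + q) * e n \<le> (1 + q) * B"
    using Suc assms(2) by (simp add: B_def mult_left_mono)
  also have "\<dots> \<le> exp q * B"
    using assms(3) by (intro mult_right_mono) (simp_all add: B_def exp_ge_add_one_self)
  finally have "(1 + q) * e n \<le> exp q * B" .
  moreover have "c \<le> c * exp (real (Suc n) * q)"
    using assms(2,3) by (simp add: mult_le_cancel_left1)
  ultimately have "e (Suc n) \<le> exp q * B + c * exp (real (Suc n) * q)"
    using Suc.prems[of n] by simp
  also have "\<dots> = real (Suc n) * c * exp (real (Suc n) * q)"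
    by (simp add: B_def algebra_simps exp_add[symmetric])
  finally show ?case .
qed

lemma grid_point_in_window:
  fixes h T :: real
  assumes "0 < h" "h \<le> 1" "0 \<le> T" "T < real n * h"
  obtains m where "m \<le> n" "T - 1 \<le> real m * h" "real m * h \<le> T"
proof
  define m where "m = nat \<lfloor>T / h\<rfloor>"
  have m: "real m = of_int \<lfloor>T / h\<rfloor>"
    using assms by (simp add: m_def)
  show "real m * h \<le> T"
    using assms m by (simp add: pos_le_divide_eq[symmetric])
  have "T / h - 1 < real m"
    using m by linarith
  then have "T - h < real m * h"
    using assms(1) by (simp add: field_simps)
  then show "T - 1 \<le> real m * h"
    using assms(2) by simp
  show "m \<le> n"
    using \<open>real m * h \<le> T\<close> assms(1,4) by (smt (verit) mult_right_mono of_nat_mono nat_le_linear)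
qed

lemma Limsup_SUP_le:
  assumes "\<forall>\<^sub>F h in F. \<forall>n. f h n \<le> b"
  shows "Limsup F (\<lambda>h. SUP n. ereal (f h n)) \<le> ereal b"
  by (rule Limsup_bounded, rule eventually_mono[OF assms]) (simp add: SUP_least)

lemma Limsup_SUP_eq_0:
  assumes "F \<noteq> bot" and "\<And>h n. 0 \<le> f h n"
    and "\<And>e. 0 < e \<Longrightarrow> \<forall>\<^sub>F h in F. \<forall>n. f h n \<le> e"
  shows "Limsup F (\<lambda>h. SUP n. ereal (f h n)) = 0"
proof (rule antisym)
  show "Limsup F (\<lambda>h. SUP n. ereal (f h n)) \<le> 0"
  proof (rule ereal_le_epsilon2)
    fix e :: real assume "0 < e"
    then show "Limsup F (\<lambda>h. SUP n. ereal (f h n)) \<le> 0 + ereal e"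
      using Limsup_SUP_le[OF assms(3)] by simp
  qed
  have "\<forall>\<^sub>F h in F. 0 \<le> (SUP n. ereal (f h n))"
    using assms(2) by (intro always_eventually allI) (meson SUP_upper2 UNIV_I ereal_less_eq(5))
  then show "0 \<le> Limsup F (\<lambda>h. SUP n. ereal (f h n))"
    using assms(1) by (intro le_Limsup)
qed

lemma norm_diff_le_diam: "i < N \<Longrightarrow> j < N \<Longrightarrow> norm (V i - V j) \<le> diam N V"
  unfolding diam_def by (rule Max_ge) (auto intro: finite_image_set2)

lemma diam_le_iff:
  assumes "0 < N"
  shows "diam N V \<le> D \<longleftrightarrow> (\<forall>i<N. \<forall>j<N. norm (V i - V j) \<le> D)"
  unfolding diam_def using assms by (subst Max_le_iff) (auto intro: finite_image_set2)

lemma diam_nonneg: "0 < N \<Longrightarrow> 0 \<le> diam N V"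
  using norm_diff_le_diam[of 0 N 0 V] by simp

lemma diam_le_twice_bound:
  assumes "0 < N" "\<And>i. i < N \<Longrightarrow> norm (V i) \<le> B"
  shows "diam N V \<le> 2 * B"
  unfolding diam_le_iff[OF assms(1)]
  using assms(2) norm_triangle_ineq4 by (smt (verit))

lemma frob_le:
  assumes "\<And>i j. i < N \<Longrightarrow> j < N \<Longrightarrow> norm (M i j) \<le> b" and "0 \<le> b"
  shows "frob N M \<le> real N * b"
proof -
  have "(\<Sum>i<N. \<Sum>j<N. (norm (M i j))\<^sup>2) \<le> (\<Sum>i<N. \<Sum>j<N. b\<^sup>2)"
    using assms by (intro sum_mono power_mono) auto
  also have "\<dots> = (real N * b)\<^sup>2"
    by (simp add: power_mult_distrib power2_eq_square)
  finally show ?thesis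
    unfolding frob_def using assms(2) by (simp add: real_le_lsqrt)
qed

lemma cnorm_le:
  assumes "\<And>i. i < N \<Longrightarrow> norm (w i) \<le> b" and "0 \<le> b"
  shows "cnorm N w \<le> sqrt (real N) * b"
proof -
  have "(\<Sum>i<N. (norm (w i))\<^sup>2) \<le> (\<Sum>i<N. b\<^sup>2)"
    using assms by (intro sum_mono power_mono) auto
  also have "\<dots> = (sqrt (real N) * b)\<^sup>2"
    by (simp add: power_mult_distrib)
  finally show ?thesis
    unfolding cnorm_def using assms(2) by (simp add: real_le_lsqrt)
qed

section \<open>Communication weights and alignment force\<close>

locale mt_model =
  fixes N :: nat and \<kappa> c1 c2 La :: real and a :: "real \<Rightarrow> real"
  assumes N: "N \<ge> 1" and kappa: "\<kappa> > 0"
    and c1: "0 < c1" and c12: "c1 \<le> c2"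
    and a_bounds: "\<And>r. r \<ge> 0 \<Longrightarrow> c1 \<le> a r \<and> a r \<le> c2"
    and La: "La > 0"
    and a_lip: "\<And>r s. r \<ge> 0 \<Longrightarrow> s \<ge> 0 \<Longrightarrow> \<bar>a r - a s\<bar> \<le> La * \<bar>r - s\<bar>"
begin

definition flock_rate :: real where
  "flock_rate = \<kappa> * c1 / c2"

definition phi_lip_const :: real where
  "phi_lip_const = 2 * La / c1 * (1 + real N * c2 / c1)"

definition force_lip_const :: "real \<Rightarrow> real" where
  "force_lip_const D = \<kappa> * (real N * phi_lip_const * D + real N + 1)"

lemma N_pos: "0 < N"
  using N by simp

lemma flock_rate_pos: "0 < flock_rate"
  using kappa c1 c12 by (simp add: flock_rate_def)

lemma flock_rate_le_kappa: "flock_rate \<le> \<kappa>"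
  using kappa c1 c12 by (simp add: flock_rate_def divide_le_eq)

lemma phi_lip_const_nonneg: "0 \<le> phi_lip_const"
  using La c1 c12 by (simp add: phi_lip_const_def)

lemma force_lip_const_nonneg: "0 \<le> D \<Longrightarrow> 0 \<le> force_lip_const D"
  using kappa phi_lip_const_nonneg by (simp add: force_lip_const_def)

lemma a_norm_bounds: "c1 \<le> a (norm y)" "a (norm y) \<le> c2"
  using a_bounds[of "norm y"] by simp_all

lemma weight_sum_bounds:
  fixes X :: "nat \<Rightarrow> 'v::euclidean_space"
  shows "c1 \<le> (\<Sum>k<N. a (norm (X i - X k)))"
    and "(\<Sum>k<N. a (norm (X i - X k))) \<le> real N * c2"
proof -
  have "c1 \<le> real N * c1"
    using N c1 by simp
  also have "\<dots> \<le> (\<Sum>k<N. a (norm (X i - X k)))"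
    using sum_bounded_below[of "{..<N}" c1 "\<lambda>k. a (norm (X i - X k))"] a_norm_bounds by auto
  finally show "c1 \<le> (\<Sum>k<N. a (norm (X i - X k)))" .
  show "(\<Sum>k<N. a (norm (X i - X k))) \<le> real N * c2"
    using sum_bounded_above[of "{..<N}" "\<lambda>k. a (norm (X i - X k))" c2] a_norm_bounds by auto
qed

lemma mt_phi_nonneg: "0 \<le> mt_phi N a X i j"
  using weight_sum_bounds(1)[of X i] a_norm_bounds(1)[of "X i - X j"] c1 by (simp add: mt_phi_def)

lemma mt_phi_ge: "c1 / (real N * c2) \<le> mt_phi N a X i j"
  unfolding mt_phi_def
  using a_norm_bounds weight_sum_bounds(2) less_le_trans[OF c1 weight_sum_bounds(1)] c1
  by (intro frac_le) (auto intro: order_trans[OF less_imp_le[OF c1]])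

lemma sum_mt_phi: "(\<Sum>j<N. mt_phi N a X i j) = 1"
  using weight_sum_bounds(1)[of X i] c1 by (simp add: mt_phi_def sum_divide_distrib[symmetric])

lemma mt_phi_le_1: "j < N \<Longrightarrow> mt_phi N a X i j \<le> 1"
  using member_le_sum[of j "{..<N}" "mt_phi N a X i"] by (simp add: mt_phi_nonneg sum_mt_phi)

lemma mt_force_eq: "mt_force N \<kappa> a X V i = \<kappa> *\<^sub>R ((\<Sum>j<N. mt_phi N a X i j *\<^sub>R V j) - V i)"
  by (simp add: mt_force_def scaleR_diff_right sum_subtractf scaleR_sum_left[symmetric] sum_mt_phi)

lemma norm_mt_force_le:
  assumes "i < N"
  shows "norm (mt_force N \<kappa> a X V i) \<le> \<kappa> * diam N V"
proof -
  have "norm (\<Sum>j<N. mt_phi N a X i j *\<^sub>R (V j - V i)) \<le> (\<Sum>j<N. mt_phi N a X i j * diam N V)"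
    using assms
    by (intro order_trans[OF norm_sum] sum_mono)
       (simp add: mt_phi_nonneg mult_left_mono norm_diff_le_diam)
  also have "\<dots> = diam N V"
    by (simp add: sum_distrib_right[symmetric] sum_mt_phi)
  finally show ?thesis
    using kappa by (simp add: mt_force_def mult_left_mono)
qed

lemma a_norm_diff_le:
  fixes X X' :: "nat \<Rightarrow> 'v::euclidean_space"
  assumes "i < N" "j < N"
  shows "\<bar>a (norm (X i - X j)) - a (norm (X' i - X' j))\<bar> \<le> 2 * La * (\<Sum>k<N. norm (X k - X' k))"
proof -
  let ?e = "\<Sum>k<N. norm (X k - X' k)"
  have "\<bar>a (norm (X i - X j)) - a (norm (X' i - X' j))\<bar> \<le> La * \<bar>norm (X i - X j) - norm (X' i - X' j)\<bar>"
    by (rule a_lip) auto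
  also have "\<bar>norm (X i - X j) - norm (X' i - X' j)\<bar> \<le> norm ((X i - X' i) - (X j - X' j))"
    using norm_triangle_ineq3[of "X i - X j" "X' i - X' j"] by (simp add: algebra_simps)
  also have "\<dots> \<le> ?e + ?e"
    using assms
    by (intro order_trans[OF norm_triangle_ineq4] add_mono member_le_sum) auto
  finally show ?thesis
    using La by (simp add: mult_left_mono)
qed

lemma mt_phi_lipschitz:
  fixes X X' :: "nat \<Rightarrow> 'v::euclidean_space"
  assumes "i < N" "j < N"
  shows "\<bar>mt_phi N a X i j - mt_phi N a X' i j\<bar> \<le> phi_lip_const * (\<Sum>k<N. norm (X k - X' k))"
proof -
  define e where "e = (\<Sum>k<N. norm (X k - X' k))"
  let ?A = "a (norm (X i - X j))" and ?A' = "a (norm (X' i - X' j))"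
  let ?S = "\<Sum>k<N. a (norm (X i - X k))" and ?S' = "\<Sum>k<N. a (norm (X' i - X' k))"
  have "\<bar>?S - ?S'\<bar> \<le> (\<Sum>k<N. \<bar>a (norm (X i - X k)) - a (norm (X' i - X' k))\<bar>)"
    unfolding sum_subtractf[symmetric] by (rule sum_abs)
  also have "\<dots> \<le> real N * (2 * La * e)"
    using assms(1) sum_bounded_above[of "{..<N}" _ "2 * La * e"] by (simp add: e_def a_norm_diff_le)
  finally have dS: "\<bar>?S - ?S'\<bar> \<le> real N * (2 * La * e)" .
  have "\<bar>?A / ?S - ?A' / ?S'\<bar> \<le> \<bar>?A - ?A'\<bar> / c1 + ?A' * \<bar>?S - ?S'\<bar> / c1\<^sup>2"
    using c1 a_norm_bounds(1)[of "X' i - X' j"] by (intro abs_divide_diff_le weight_sum_bounds(1)) auto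
  also have "\<dots> \<le> 2 * La * e / c1 + c2 * (real N * (2 * La * e)) / c1\<^sup>2"
    using c1 a_norm_bounds[of "X' i - X' j"] a_norm_diff_le[OF assms, of X X'] dS
    by (intro add_mono divide_right_mono mult_mono) (auto simp: e_def)
  also have "\<dots> = phi_lip_const * e"
    using c1 by (simp add: phi_lip_const_def power2_eq_square field_simps)
  finally show ?thesis
    by (simp add: mt_phi_def e_def)
qed

lemma norm_mt_force_summand_diff_le:
  fixes X X' V V' :: "nat \<Rightarrow> 'v::euclidean_space"
  assumes i: "i < N" and j: "j < N" and D: "diam N V' \<le> D"
  shows "norm (mt_phi N a X i j *\<^sub>R (V j - V i) - mt_phi N a X' i j *\<^sub>R (V' j - V' i))
    \<le> phi_lip_const * (\<Sum>k<N. norm (X k - X' k)) * D + (norm (V j - V' j) + norm (V i - V' i))"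
proof -
  let ?\<phi> = "mt_phi N a X i j" and ?\<phi>' = "mt_phi N a X' i j"
  have "?\<phi> *\<^sub>R (V j - V i) - ?\<phi>' *\<^sub>R (V' j - V' i)
      = (?\<phi> - ?\<phi>') *\<^sub>R (V' j - V' i) + ?\<phi> *\<^sub>R ((V j - V' j) - (V i - V' i))"
    by (simp add: algebra_simps)
  also have "norm \<dots> \<le> norm ((?\<phi> - ?\<phi>') *\<^sub>R (V' j - V' i)) + norm (?\<phi> *\<^sub>R ((V j - V' j) - (V i - V' i)))"
    by (rule norm_triangle_ineq)
  also have "norm ((?\<phi> - ?\<phi>') *\<^sub>R (V' j - V' i)) \<le> phi_lip_const * (\<Sum>k<N. norm (X k - X' k)) * D"
    unfolding norm_scaleR
    using mt_phi_lipschitz[OF i j] norm_diff_le_diam[OF j i, of V'] D phi_lip_const_nonneg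
    by (intro mult_mono) (simp_all add: sum_nonneg)
  also have "norm (?\<phi> *\<^sub>R ((V j - V' j) - (V i - V' i))) \<le> norm (V j - V' j) + norm (V i - V' i)"
    unfolding norm_scaleR using mt_phi_nonneg[of X i j] mt_phi_le_1[OF j, of X i]
    by (intro mult_left_le_one_le order_trans[OF _ norm_triangle_ineq4]) simp_all
  finally show ?thesis
    by simp
qed

lemma mt_force_lipschitz:
  fixes X X' V V' :: "nat \<Rightarrow> 'v::euclidean_space"
  assumes i: "i < N" and D: "diam N V' \<le> D"
  shows "norm (mt_force N \<kappa> a X V i - mt_force N \<kappa> a X' V' i)
    \<le> force_lip_const D * (\<Sum>k<N. norm (X k - X' k) + norm (V k - V' k))"
proof -
  define e where "e = (\<Sum>k<N. norm (X k - X' k))"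
  define ev where "ev = (\<Sum>k<N. norm (V k - V' k))"
  define d where "d = phi_lip_const * e * D"
  have e_nonneg: "0 \<le> e" and D_nonneg: "0 \<le> D" and ev_ge: "norm (V i - V' i) \<le> ev"
    using diam_nonneg[OF N_pos, of V'] D i by (auto simp: e_def ev_def sum_nonneg intro!: member_le_sum)
  have "norm (mt_force N \<kappa> a X V i - mt_force N \<kappa> a X' V' i)
      \<le> \<kappa> * (\<Sum>j<N. d + (norm (V j - V' j) + norm (V i - V' i)))"
    unfolding mt_force_def scaleR_diff_right[symmetric] sum_subtractf[symmetric] norm_scaleR
      abs_of_pos[OF kappa] d_def e_def
    using kappa norm_mt_force_summand_diff_le[OF i _ D]
    by (intro mult_left_mono order_trans[OF norm_sum] sum_mono) simp_all
  also have "(\<Sum>j<N. d + (norm (V j - V' j) + norm (V i - V' i)))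
      = real N * d + ev + real N * norm (V i - V' i)"
    by (simp add: ev_def sum.distrib)
  also have "\<dots> \<le> (real N * phi_lip_const * D + real N + 1) * (e + ev)"
  proof -
    have "real N * norm (V i - V' i) \<le> real N * ev"
      using ev_ge by (simp add: mult_left_mono)
    moreover have "0 \<le> real N * phi_lip_const * D * ev + (real N + 1) * e"
      using phi_lip_const_nonneg e_nonneg D_nonneg ev_ge by (simp add: order_trans[OF norm_ge_zero])
    moreover have "(real N * phi_lip_const * D + real N + 1) * (e + ev)
        = real N * d + ev + real N * ev + (real N * phi_lip_const * D * ev + (real N + 1) * e)"
      by (simp add: d_def algebra_simps)
    ultimately show ?thesis
      by linarith
  qed
  finally show ?thesis
    using kappa by (simp add: force_lip_const_def e_def ev_def sum.distrib mult.assoc mult_left_mono)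
qed

end

section \<open>The explicit Euler scheme\<close>

context mt_model
begin

abbreviation xh :: "real \<Rightarrow> (nat \<Rightarrow> 'v::euclidean_space) \<Rightarrow> (nat \<Rightarrow> 'v) \<Rightarrow> nat \<Rightarrow> nat \<Rightarrow> 'v" where
  "xh h X0 V0 n \<equiv> fst (mt_disc N \<kappa> a h X0 V0 n)"

abbreviation vh :: "real \<Rightarrow> (nat \<Rightarrow> 'v::euclidean_space) \<Rightarrow> (nat \<Rightarrow> 'v) \<Rightarrow> nat \<Rightarrow> nat \<Rightarrow> 'v" where
  "vh h X0 V0 n \<equiv> snd (mt_disc N \<kappa> a h X0 V0 n)"

lemma xh_Suc: "xh h X0 V0 (Suc n) = (\<lambda>i. xh h X0 V0 n i + h *\<^sub>R vh h X0 V0 n i)"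
  by (simp add: split_beta Let_def)

lemma vh_Suc:
  "vh h X0 V0 (Suc n) = (\<lambda>i. vh h X0 V0 n i + h *\<^sub>R mt_force N \<kappa> a (xh h X0 V0 n) (vh h X0 V0 n) i)"
  by (simp add: split_beta Let_def)

declare mt_disc.simps(2) [simp del]

lemma contraction_factor_bounds:
  assumes "0 \<le> h" "h * \<kappa> \<le> 1"
  shows "0 \<le> 1 - h * flock_rate" and "(1 - h * flock_rate) ^ n \<le> exp (- flock_rate * (real n * h))"
proof -
  show nonneg: "0 \<le> 1 - h * flock_rate"
    using assms flock_rate_le_kappa by (smt (verit) mult_left_mono)
  have "(1 - h * flock_rate) ^ n \<le> exp (- (h * flock_rate)) ^ n"
    using nonneg by (intro power_mono) (simp_all add: exp_ge_add_one_self[of "- (h * flock_rate)", simplified])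
  also have "\<dots> = exp (- flock_rate * (real n * h))"
    by (simp add: exp_of_nat_mult[symmetric] algebra_simps)
  finally show "(1 - h * flock_rate) ^ n \<le> exp (- flock_rate * (real n * h))" .
qed

lemma diam_euler_step_le:
  fixes X V :: "nat \<Rightarrow> 'v::euclidean_space"
  assumes h: "0 \<le> h" "h * \<kappa> \<le> 1"
  shows "diam N (\<lambda>i. V i + h *\<^sub>R mt_force N \<kappa> a X V i) \<le> (1 - h * flock_rate) * diam N V"
  unfolding diam_le_iff[OF N_pos]
proof (intro allI impI)
  fix i k assume ik: "i < N" "k < N"
  define A where "A i = (\<Sum>j<N. mt_phi N a X i j *\<^sub>R V j)" for i
  have "norm (A i - A k) \<le> (1 - real N * (c1 / (real N * c2))) * diam N V"
    unfolding A_def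
    by (rule norm_diff_weighted_sums_le) (simp_all add: mt_phi_ge sum_mt_phi norm_diff_le_diam)
  then have avg: "norm (A i - A k) \<le> (1 - c1 / c2) * diam N V"
    using N_pos by simp
  have "(V i + h *\<^sub>R mt_force N \<kappa> a X V i) - (V k + h *\<^sub>R mt_force N \<kappa> a X V k)
      = (1 - h * \<kappa>) *\<^sub>R (V i - V k) + (h * \<kappa>) *\<^sub>R (A i - A k)"
    by (simp add: mt_force_eq A_def algebra_simps)
  also have "norm \<dots> \<le> (1 - h * \<kappa>) * diam N V + (h * \<kappa>) * ((1 - c1 / c2) * diam N V)"
    using h kappa ik avg
    by (intro order_trans[OF norm_triangle_ineq] add_mono)
       (simp_all add: mult_left_mono norm_diff_le_diam)
  also have "\<dots> = (1 - h * flock_rate) * diam N V"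
    by (simp add: flock_rate_def algebra_simps)
  finally show "norm ((V i + h *\<^sub>R mt_force N \<kappa> a X V i) - (V k + h *\<^sub>R mt_force N \<kappa> a X V k))
      \<le> (1 - h * flock_rate) * diam N V" .
qed

lemma diam_vh_le:
  assumes "0 \<le> h" "h * \<kappa> \<le> 1"
  shows "diam N (vh h X0 V0 n) \<le> (1 - h * flock_rate) ^ n * diam N V0"
proof (induction n)
  case 0
  then show ?case by simp
next
  case (Suc n)
  have "diam N (vh h X0 V0 (Suc n)) \<le> (1 - h * flock_rate) * diam N (vh h X0 V0 n)"
    unfolding vh_Suc using assms by (rule diam_euler_step_le)
  also have "\<dots> \<le> (1 - h * flock_rate) * ((1 - h * flock_rate) ^ n * diam N V0)"
    using Suc contraction_factor_bounds(1)[OF assms] by (rule mult_left_mono)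
  finally show ?case by simp
qed

lemma norm_vh_Suc_diff_le:
  assumes "0 \<le> h" "h * \<kappa> \<le> 1" "i < N"
  shows "norm (vh h X0 V0 (Suc n) i - vh h X0 V0 n i) \<le> h * \<kappa> * ((1 - h * flock_rate) ^ n * diam N V0)"
proof -
  have "norm (mt_force N \<kappa> a (xh h X0 V0 n) (vh h X0 V0 n) i) \<le> \<kappa> * ((1 - h * flock_rate) ^ n * diam N V0)"
    using norm_mt_force_le[OF assms(3)] diam_vh_le[OF assms(1,2)] kappa
    by (meson mult_left_mono order_trans less_imp_le)
  then show ?thesis
    unfolding vh_Suc using assms(1) by (simp add: mult_left_mono mult.assoc)
qed

lemma norm_vh_diff_le:
  assumes h: "0 \<le> h" "h * \<kappa> \<le> 1" and i: "i < N" and "m \<le> n"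
  shows "norm (vh h X0 V0 n i - vh h X0 V0 m i)
    \<le> \<kappa> * diam N V0 * ((1 - h * flock_rate) ^ m - (1 - h * flock_rate) ^ n) / flock_rate"
  using \<open>m \<le> n\<close>
proof (induction n rule: dec_induct)
  case base
  then show ?case by simp
next
  case (step n)
  let ?r = "1 - h * flock_rate"
  have "norm (vh h X0 V0 (Suc n) i - vh h X0 V0 m i)
      \<le> norm (vh h X0 V0 (Suc n) i - vh h X0 V0 n i) + norm (vh h X0 V0 n i - vh h X0 V0 m i)"
    by (rule norm_diff_triangle_le[OF order_refl order_refl])
  also have "\<dots> \<le> h * \<kappa> * (?r ^ n * diam N V0) + \<kappa> * diam N V0 * (?r ^ m - ?r ^ n) / flock_rate"
    using norm_vh_Suc_diff_le[OF h i] step.IH by (rule add_mono)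
  also have "\<dots> = \<kappa> * diam N V0 * (?r ^ m - ?r ^ Suc n) / flock_rate"
    using flock_rate_pos by (simp add: field_simps)
  finally show ?case .
qed

lemma norm_xh_rel_drift_le:
  assumes h: "0 \<le> h" "h * \<kappa> \<le> 1" and ij: "i < N" "j < N"
  shows "norm ((xh h X0 V0 n i - xh h X0 V0 n j) - (X0 i - X0 j))
    \<le> diam N V0 * (1 - (1 - h * flock_rate) ^ n) / flock_rate"
proof (induction n)
  case 0
  then show ?case by simp
next
  case (Suc n)
  let ?r = "1 - h * flock_rate"
  have "(xh h X0 V0 (Suc n) i - xh h X0 V0 (Suc n) j) - (X0 i - X0 j)
      = ((xh h X0 V0 n i - xh h X0 V0 n j) - (X0 i - X0 j)) + h *\<^sub>R (vh h X0 V0 n i - vh h X0 V0 n j)"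
    by (simp add: xh_Suc algebra_simps)
  also have "norm \<dots> \<le> diam N V0 * (1 - ?r ^ n) / flock_rate + h * (?r ^ n * diam N V0)"
    using Suc.IH h norm_diff_le_diam[OF ij, of "vh h X0 V0 n"] diam_vh_le[OF h, of X0 V0 n]
    by (intro order_trans[OF norm_triangle_ineq] add_mono) (auto intro: mult_left_mono order_trans)
  also have "\<dots> = diam N V0 * (1 - ?r ^ Suc n) / flock_rate"
    using flock_rate_pos by (simp add: field_simps)
  finally show ?case .
qed

lemma eventually_admissible_step:
  assumes "0 < t"
  shows "\<forall>\<^sub>F m in sequentially. 0 < t / real m \<and> t / real m * \<kappa> \<le> 1 \<and> real m * (t / real m) = t"
  using eventually_ge_at_top[of "nat \<lceil>t * \<kappa>\<rceil> + 1"]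
proof eventually_elim
  case (elim m)
  then have "t * \<kappa> < real m" "0 < real m"
    by linarith+
  then show ?case
    using assms by (simp add: field_simps)
qed

lemma eventually_small_step: "\<forall>\<^sub>F h in at_right 0. 0 < h \<and> h < 1 \<and> h * \<kappa> \<le> 1"
proof -
  have "((\<lambda>h. h * \<kappa>) \<longlongrightarrow> 0) (at_right (0::real))"
    by (auto intro!: tendsto_eq_intros)
  from order_tendstoD(2)[OF this, of 1]
  have "\<forall>\<^sub>F h in at_right 0. h * \<kappa> < 1"
    by simp
  moreover have "\<forall>\<^sub>F h in at_right 0. h < (1::real)"
    by (rule order_tendstoD(2)[OF tendsto_ident_at]) simp
  ultimately show ?thesis
    using eventually_at_right_less[of 0] by eventually_elim auto
qed

end

section \<open>Solutions of the continuous model\<close>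

locale mt_solution = mt_model +
  fixes x v :: "real \<Rightarrow> nat \<Rightarrow> 'v::euclidean_space"
  assumes mt_ode: "\<forall>t\<ge>0. \<forall>i<N.
      ((\<lambda>s. x s i) has_vector_derivative v t i) (at t within {0..}) \<and>
      ((\<lambda>s. v s i) has_vector_derivative mt_force N \<kappa> a (x t) (v t) i) (at t within {0..})"
begin

lemma
  assumes "0 \<le> t0" "t \<in> {t0..t1}" "i < N"
  shows x_has_vector_derivative: "((\<lambda>s. x s i) has_vector_derivative v t i) (at t within {t0..t1})"
    and v_has_vector_derivative:
      "((\<lambda>s. v s i) has_vector_derivative mt_force N \<kappa> a (x t) (v t) i) (at t within {t0..t1})"
proof -
  have "0 \<le> t" "{t0..t1} \<subseteq> {0..}"
    using assms by auto
  then show "((\<lambda>s. x s i) has_vector_derivative v t i) (at t within {t0..t1})"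
    and "((\<lambda>s. v s i) has_vector_derivative mt_force N \<kappa> a (x t) (v t) i) (at t within {t0..t1})"
    using mt_ode assms(3) by (blast intro: has_vector_derivative_within_subset)+
qed

definition sol_dist :: "(nat \<Rightarrow> 'v) \<Rightarrow> (nat \<Rightarrow> 'v) \<Rightarrow> real \<Rightarrow> real" where
  "sol_dist X V t = (\<Sum>i<N. norm (X i - x t i) + norm (V i - v t i))"

lemma v_bounded_on:
  obtains B where "0 \<le> B" "\<And>s i. s \<in> {0..T} \<Longrightarrow> i < N \<Longrightarrow> norm (v s i) \<le> B"
proof -
  have v_cont: "continuous_on {0..T} (\<lambda>s. v s i)" if "i < N" for i
    unfolding continuous_on_eq_continuous_within
    using v_has_vector_derivative[of 0 _ T i] that by (blast intro: has_vector_derivative_continuous)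
  define g where "g s = (\<Sum>i<N. norm (v s i))" for s
  have "continuous_on {0..T} g"
    unfolding g_def using v_cont by (intro continuous_on_sum continuous_on_norm) auto
  then have "bounded (g ` {0..T})"
    by (intro compact_imp_bounded compact_continuous_image) auto
  then obtain B where "\<forall>y\<in>g ` {0..T}. norm y \<le> B"
    by (auto simp: bounded_iff)
  then have B: "\<And>s. s \<in> {0..T} \<Longrightarrow> norm (g s) \<le> B"
    by blast
  have bound: "norm (v s i) \<le> max B 0" if "s \<in> {0..T}" "i < N" for s i
    using member_le_sum[of i "{..<N}" "\<lambda>i. norm (v s i)"] B[OF that(1)] that(2)
    by (simp add: g_def sum_nonneg)
  show ?thesis
    by (rule that[of "max B 0"]) (use bound in auto)
qed

lemma solution_lipschitz_on:
  obtains K where "0 \<le> K"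
    "\<And>s t i. 0 \<le> t \<Longrightarrow> t \<le> s \<Longrightarrow> s \<le> T \<Longrightarrow> i < N \<Longrightarrow>
      norm (x s i - x t i) + norm (v s i - v t i) \<le> K * (s - t)"
proof -
  obtain B where B: "0 \<le> B" "\<And>s i. s \<in> {0..T} \<Longrightarrow> i < N \<Longrightarrow> norm (v s i) \<le> B"
    using v_bounded_on[of T] by blast
  have diam_le: "diam N (v s) \<le> 2 * B" if "s \<in> {0..T}" for s
    using B(2)[OF that] by (intro diam_le_twice_bound N_pos)
  have force_le: "norm (mt_force N \<kappa> a (x s) (v s) i) \<le> \<kappa> * (2 * B)" if "s \<in> {0..T}" "i < N" for s i
    using norm_mt_force_le[OF that(2), of "x s" "v s"] mult_left_mono[OF diam_le[OF that(1)], of \<kappa>] kappa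
    by linarith
  show ?thesis
  proof (rule that[of "B + \<kappa> * (2 * B)"])
    show "0 \<le> B + \<kappa> * (2 * B)"
      using B(1) kappa by simp
    fix s t i assume st: "0 \<le> t" "t \<le> s" "s \<le> T" and i: "i < N"
    have "norm (x s i - x t i) \<le> B * (s - t)"
      using st i B(2) x_has_vector_derivative
      by (intro norm_diff_le_of_vector_derivative_bound[where f="\<lambda>s. x s i" and f'="\<lambda>s. v s i"]) auto
    moreover have "norm (v s i - v t i) \<le> \<kappa> * (2 * B) * (s - t)"
      using st i force_le v_has_vector_derivative
      by (intro norm_diff_le_of_vector_derivative_bound[where f="\<lambda>s. v s i"
          and f'="\<lambda>s. mt_force N \<kappa> a (x s) (v s) i"]) auto
    ultimately show "norm (x s i - x t i) + norm (v s i - v t i) \<le> (B + \<kappa> * (2 * B)) * (s - t)"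
      by (simp add: algebra_simps)
  qed
qed

lemma force_lipschitz_along_solution:
  obtains L where "0 \<le> L"
    "\<And>X V t i. t \<in> {0..T} \<Longrightarrow> i < N \<Longrightarrow>
      norm (mt_force N \<kappa> a X V i - mt_force N \<kappa> a (x t) (v t) i) \<le> L * sol_dist X V t"
proof -
  obtain B where B: "0 \<le> B" "\<And>s i. s \<in> {0..T} \<Longrightarrow> i < N \<Longrightarrow> norm (v s i) \<le> B"
    using v_bounded_on[of T] by blast
  show ?thesis
  proof (rule that[of "force_lip_const (2 * B)"])
    show "0 \<le> force_lip_const (2 * B)"
      using B(1) by (simp add: force_lip_const_nonneg)
    fix X V and t i assume "t \<in> {0..T}" "i < N"
    then show "norm (mt_force N \<kappa> a X V i - mt_force N \<kappa> a (x t) (v t) i)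
        \<le> force_lip_const (2 * B) * sol_dist X V t"
      unfolding sol_dist_def using B(2) by (intro mt_force_lipschitz diam_le_twice_bound N_pos) auto
  qed
qed

lemma derivatives_lipschitz_on:
  obtains M where "0 \<le> M"
    "\<And>s t i. 0 \<le> t \<Longrightarrow> t \<le> s \<Longrightarrow> s \<le> T \<Longrightarrow> i < N \<Longrightarrow>
      norm (v s i - v t i) + norm (mt_force N \<kappa> a (x s) (v s) i - mt_force N \<kappa> a (x t) (v t) i)
      \<le> M * (s - t)"
proof -
  obtain K where K: "0 \<le> K" "\<And>s t i. 0 \<le> t \<Longrightarrow> t \<le> s \<Longrightarrow> s \<le> T \<Longrightarrow> i < N \<Longrightarrow>
      norm (x s i - x t i) + norm (v s i - v t i) \<le> K * (s - t)"
    using solution_lipschitz_on[of T] by blast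
  obtain L where L: "0 \<le> L" "\<And>X V t i. t \<in> {0..T} \<Longrightarrow> i < N \<Longrightarrow>
      norm (mt_force N \<kappa> a X V i - mt_force N \<kappa> a (x t) (v t) i) \<le> L * sol_dist X V t"
    using force_lipschitz_along_solution[of T] by blast
  show ?thesis
  proof (rule that[of "K + L * (real N * K)"])
    show "0 \<le> K + L * (real N * K)"
      using K(1) L(1) by simp
    fix s t i assume st: "0 \<le> t" "t \<le> s" "s \<le> T" and i: "i < N"
    have "norm (v s i - v t i) \<le> K * (s - t)"
      using K(2)[OF st i] norm_ge_zero[of "x s i - x t i"] by linarith
    moreover have "norm (mt_force N \<kappa> a (x s) (v s) i - mt_force N \<kappa> a (x t) (v t) i)
        \<le> L * (real N * K) * (s - t)"
    proof -
      have "sol_dist (x s) (v s) t \<le> (\<Sum>k<N. K * (s - t))"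
        unfolding sol_dist_def using K(2)[OF st] by (intro sum_mono) auto
      then have "L * sol_dist (x s) (v s) t \<le> L * (real N * (K * (s - t)))"
        using L(1) by (simp add: mult_left_mono)
      moreover have "norm (mt_force N \<kappa> a (x s) (v s) i - mt_force N \<kappa> a (x t) (v t) i)
          \<le> L * sol_dist (x s) (v s) t"
        using L(2)[of t i "x s" "v s"] st i by simp
      ultimately show ?thesis
        by (simp add: ac_simps)
    qed
    ultimately show "norm (v s i - v t i)
        + norm (mt_force N \<kappa> a (x s) (v s) i - mt_force N \<kappa> a (x t) (v t) i)
        \<le> (K + L * (real N * K)) * (s - t)"
      by (simp add: distrib_right)
  qed
qed

definition local_error :: "real \<Rightarrow> real \<Rightarrow> nat \<Rightarrow> real" where
  "local_error t h i = norm (x (t + h) i - x t i - h *\<^sub>R v t i)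
    + norm (v (t + h) i - v t i - h *\<^sub>R mt_force N \<kappa> a (x t) (v t) i)"

lemma local_error_le:
  obtains C where "0 \<le> C"
    "\<And>t h i. 0 \<le> t \<Longrightarrow> 0 \<le> h \<Longrightarrow> t + h \<le> T \<Longrightarrow> i < N \<Longrightarrow> local_error t h i \<le> C * h\<^sup>2"
proof -
  obtain M where M: "0 \<le> M" "\<And>s t i. 0 \<le> t \<Longrightarrow> t \<le> s \<Longrightarrow> s \<le> T \<Longrightarrow> i < N \<Longrightarrow>
      norm (v s i - v t i) + norm (mt_force N \<kappa> a (x s) (v s) i - mt_force N \<kappa> a (x t) (v t) i)
      \<le> M * (s - t)"
    using derivatives_lipschitz_on[of T] by blast
  show ?thesis
  proof (rule that[of "2 * M"])
    show "0 \<le> 2 * M"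
      using M(1) by simp
    fix t h i assume t: "0 \<le> t" and h: "0 \<le> h" "t + h \<le> T" and i: "i < N"
    have M_window: "norm (v s i - v t i) \<le> M * (s - t)"
      "norm (mt_force N \<kappa> a (x s) (v s) i - mt_force N \<kappa> a (x t) (v t) i) \<le> M * (s - t)"
      if "s \<in> {t..t + h}" for s
    proof -
      have "norm (v s i - v t i) + norm (mt_force N \<kappa> a (x s) (v s) i - mt_force N \<kappa> a (x t) (v t) i)
          \<le> M * (s - t)"
        using M(2)[of t s i] that t h i by auto
      then show "norm (v s i - v t i) \<le> M * (s - t)"
        and "norm (mt_force N \<kappa> a (x s) (v s) i - mt_force N \<kappa> a (x t) (v t) i) \<le> M * (s - t)"
        using norm_ge_zero[of "v s i - v t i"]
          norm_ge_zero[of "mt_force N \<kappa> a (x s) (v s) i - mt_force N \<kappa> a (x t) (v t) i"]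
        by linarith+
    qed
    have "norm (x (t + h) i - x t i - h *\<^sub>R v t i) \<le> M * h\<^sup>2"
      using h(1) M(1) x_has_vector_derivative[OF t _ i] M_window(1)
      by (rule norm_first_order_remainder_le)
    moreover have "norm (v (t + h) i - v t i - h *\<^sub>R mt_force N \<kappa> a (x t) (v t) i) \<le> M * h\<^sup>2"
      using h(1) M(1) v_has_vector_derivative[OF t _ i] M_window(2)
      by (rule norm_first_order_remainder_le)
    ultimately show "local_error t h i \<le> 2 * M * h\<^sup>2"
      by (simp add: local_error_def)
  qed
qed

lemma sol_dist_euler_step_le:
  assumes t: "0 \<le> t" and h: "0 \<le> h"
    and L: "\<And>i. i < N \<Longrightarrow> norm (mt_force N \<kappa> a X V i - mt_force N \<kappa> a (x t) (v t) i) \<le> L * sol_dist X V t"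
    and C: "\<And>i. i < N \<Longrightarrow> local_error t h i \<le> C * h\<^sup>2"
  shows "sol_dist (\<lambda>i. X i + h *\<^sub>R V i) (\<lambda>i. V i + h *\<^sub>R mt_force N \<kappa> a X V i) (t + h)
    \<le> (1 + h * (1 + real N * L)) * sol_dist X V t + real N * C * h\<^sup>2"
proof -
  define d where "d = sol_dist X V t"
  have "norm (X i + h *\<^sub>R V i - x (t + h) i) + norm (V i + h *\<^sub>R mt_force N \<kappa> a X V i - v (t + h) i)
      \<le> norm (X i - x t i) + norm (V i - v t i) + h * (norm (V i - v t i) + L * d) + C * h\<^sup>2"
    if i: "i < N" for i
  proof -
    have "h * norm (mt_force N \<kappa> a X V i - mt_force N \<kappa> a (x t) (v t) i) \<le> h * (L * d)"
      using L[OF i] h by (simp add: d_def mult_left_mono)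
    then show ?thesis
      using norm_euler_step_error_le[OF h, of "X i" "V i" "x (t + h) i" "mt_force N \<kappa> a X V i"
          "v (t + h) i" "x t i" "v t i" "mt_force N \<kappa> a (x t) (v t) i"] C[OF i]
      by (simp add: local_error_def distrib_left)
  qed
  then have "sol_dist (\<lambda>i. X i + h *\<^sub>R V i) (\<lambda>i. V i + h *\<^sub>R mt_force N \<kappa> a X V i) (t + h)
      \<le> (\<Sum>i<N. norm (X i - x t i) + norm (V i - v t i) + h * (norm (V i - v t i) + L * d) + C * h\<^sup>2)"
    unfolding sol_dist_def by (intro sum_mono) simp
  also have "\<dots> = d + h * ((\<Sum>i<N. norm (V i - v t i)) + real N * L * d) + real N * C * h\<^sup>2"
    by (simp add: d_def sol_dist_def sum.distrib sum_distrib_left algebra_simps)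
  also have "\<dots> \<le> (1 + h * (1 + real N * L)) * d + real N * C * h\<^sup>2"
  proof -
    have "(\<Sum>i<N. norm (V i - v t i)) \<le> d"
      unfolding d_def sol_dist_def by (intro sum_mono) simp
    then have "h * (\<Sum>i<N. norm (V i - v t i)) \<le> h * d"
      using h by (simp add: mult_left_mono)
    then show ?thesis
      by (simp add: algebra_simps)
  qed
  finally show ?thesis
    by (simp add: d_def)
qed

lemma euler_error_le:
  obtains C where "\<And>h n. 0 < h \<Longrightarrow> real n * h \<le> T \<Longrightarrow>
    sol_dist (xh h (x 0) (v 0) n) (vh h (x 0) (v 0) n) (real n * h) \<le> C * h"
proof -
  obtain C where C: "0 \<le> C"
    "\<And>t h i. 0 \<le> t \<Longrightarrow> 0 \<le> h \<Longrightarrow> t + h \<le> T \<Longrightarrow> i < N \<Longrightarrow> local_error t h i \<le> C * h\<^sup>2"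
    using local_error_le[of T] by blast
  obtain L where L: "0 \<le> L" "\<And>X V t i. t \<in> {0..T} \<Longrightarrow> i < N \<Longrightarrow>
      norm (mt_force N \<kappa> a X V i - mt_force N \<kappa> a (x t) (v t) i) \<le> L * sol_dist X V t"
    using force_lipschitz_along_solution[of T] by blast
  define L' where "L' = 1 + real N * L"
  show ?thesis
  proof (rule that[of "real N * C * T * exp (L' * T)"])
    fix h :: real and n assume h: "0 < h" and nT: "real n * h \<le> T"
    define e where "e k = sol_dist (xh h (x 0) (v 0) k) (vh h (x 0) (v 0) k) (real k * h)" for k
    have "e n \<le> real n * (real N * C * h\<^sup>2) * exp (real n * (h * L'))"
    proof (rule discrete_gronwall)
      fix k assume "k < n"
      then have "real (Suc k) * h \<le> real n * h"
        using h by (intro mult_right_mono) auto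
      then have kT: "real k * h + h \<le> T" and Suc_eq: "real (Suc k) * h = real k * h + h"
        using nT by (simp_all add: algebra_simps)
      show "e (Suc k) \<le> (1 + h * L') * e k + real N * C * h\<^sup>2"
        unfolding e_def xh_Suc vh_Suc Suc_eq L'_def using h kT L C
        by (intro sol_dist_euler_step_le) auto
    qed (use h L C in \<open>auto simp: e_def sol_dist_def L'_def\<close>)
    also have "\<dots> = real N * C * (real n * h) * exp (L' * (real n * h)) * h"
      by (simp add: power2_eq_square algebra_simps)
    also have "\<dots> \<le> real N * C * T * exp (L' * T) * h"
      using h nT L(1) C(1) order_trans[OF _ nT, of 0]
      by (intro mult_right_mono mult_mono) (auto simp: L'_def mult_left_mono)
    finally show "sol_dist (xh h (x 0) (v 0) n) (vh h (x 0) (v 0) n) (real n * h) \<le> real N * C * T * exp (L' * T) * h"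
      by (simp add: e_def)
  qed
qed

lemma norm_le_sol_dist:
  assumes "i < N"
  shows "norm (X i - x t i) \<le> sol_dist X V t" and "norm (V i - v t i) \<le> sol_dist X V t"
proof -
  have "norm (X i - x t i) + norm (V i - v t i) \<le> sol_dist X V t"
    unfolding sol_dist_def using assms by (intro member_le_sum) simp_all
  then show "norm (X i - x t i) \<le> sol_dist X V t" and "norm (V i - v t i) \<le> sol_dist X V t"
    using norm_ge_zero[of "X i - x t i"] norm_ge_zero[of "V i - v t i"] by linarith+
qed

lemma euler_tendsto:
  assumes "0 < t" "i < N"
  shows "(\<lambda>m. xh (t / real m) (x 0) (v 0) m i) \<longlonglongrightarrow> x t i"
    and "(\<lambda>m. vh (t / real m) (x 0) (v 0) m i) \<longlonglongrightarrow> v t i"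
proof -
  obtain C where C: "\<And>h n. 0 < h \<Longrightarrow> real n * h \<le> t \<Longrightarrow>
      sol_dist (xh h (x 0) (v 0) n) (vh h (x 0) (v 0) n) (real n * h) \<le> C * h"
    using euler_error_le[of t] by blast
  have err: "\<forall>\<^sub>F m in sequentially.
      sol_dist (xh (t / real m) (x 0) (v 0) m) (vh (t / real m) (x 0) (v 0) m) t \<le> C * t / real m"
    using eventually_admissible_step[OF assms(1)]
  proof eventually_elim
    case (elim m)
    then show ?case
      using C[of "t / real m" m] by simp
  qed
  have lim: "(\<lambda>m. C * t / real m) \<longlonglongrightarrow> 0"
    by (rule lim_const_over_n)
  have "\<forall>\<^sub>F m in sequentially. norm (xh (t / real m) (x 0) (v 0) m i - x t i) \<le> C * t / real m"
    using err by eventually_elim (rule order_trans[OF norm_le_sol_dist(1)[OF assms(2)]])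
  then show "(\<lambda>m. xh (t / real m) (x 0) (v 0) m i) \<longlonglongrightarrow> x t i"
    by (rule LIM_zero_cancel[OF Lim_null_comparison[OF _ lim]])
  have "\<forall>\<^sub>F m in sequentially. norm (vh (t / real m) (x 0) (v 0) m i - v t i) \<le> C * t / real m"
    using err by eventually_elim (rule order_trans[OF norm_le_sol_dist(2)[OF assms(2)]])
  then show "(\<lambda>m. vh (t / real m) (x 0) (v 0) m i) \<longlonglongrightarrow> v t i"
    by (rule LIM_zero_cancel[OF Lim_null_comparison[OF _ lim]])
qed

lemma diam_v_le:
  assumes "0 \<le> t"
  shows "diam N (v t) \<le> exp (- flock_rate * t) * diam N (v 0)"
proof (cases "t = 0")
  case False
  with assms have t: "0 < t" by simp
  show ?thesis
    unfolding diam_le_iff[OF N_pos]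
  proof (intro allI impI)
    fix i j assume ij: "i < N" "j < N"
    let ?V = "\<lambda>m. vh (t / real m) (x 0) (v 0) m"
    have "(\<lambda>m. norm (?V m i - ?V m j)) \<longlonglongrightarrow> norm (v t i - v t j)"
      by (intro tendsto_intros euler_tendsto t ij)
    moreover have "\<forall>\<^sub>F m in sequentially. norm (?V m i - ?V m j) \<le> exp (- flock_rate * t) * diam N (v 0)"
      using eventually_admissible_step[OF t]
    proof eventually_elim
      case (elim m)
      have "norm (?V m i - ?V m j) \<le> diam N (?V m)"
        by (rule norm_diff_le_diam[OF ij])
      also have "\<dots> \<le> (1 - t / real m * flock_rate) ^ m * diam N (v 0)"
        using elim by (intro diam_vh_le) auto
      also have "\<dots> \<le> exp (- flock_rate * t) * diam N (v 0)"
        using elim contraction_factor_bounds(2)[of "t / real m" m] diam_nonneg[OF N_pos, of "v 0"]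
        by (intro mult_right_mono) auto
      finally show ?case .
    qed
    ultimately show "norm (v t i - v t j) \<le> exp (- flock_rate * t) * diam N (v 0)"
      by (intro tendsto_upperbound) auto
  qed
qed simp

lemma x_rel_drift_le:
  assumes "0 \<le> t" "i < N" "j < N"
  shows "norm ((x t i - x t j) - (x 0 i - x 0 j)) \<le> diam N (v 0) / flock_rate"
proof (cases "t = 0")
  case True
  then show ?thesis
    using diam_nonneg[OF N_pos, of "v 0"] flock_rate_pos by simp
next
  case False
  with assms have t: "0 < t" by simp
  let ?X = "\<lambda>m. xh (t / real m) (x 0) (v 0) m"
  have "(\<lambda>m. norm ((?X m i - ?X m j) - (x 0 i - x 0 j))) \<longlonglongrightarrow> norm ((x t i - x t j) - (x 0 i - x 0 j))"
    by (intro tendsto_intros euler_tendsto t assms(2,3))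
  moreover have "\<forall>\<^sub>F m in sequentially. norm ((?X m i - ?X m j) - (x 0 i - x 0 j)) \<le> diam N (v 0) / flock_rate"
    using eventually_admissible_step[OF t]
  proof eventually_elim
    case (elim m)
    then have "norm ((?X m i - ?X m j) - (x 0 i - x 0 j))
        \<le> diam N (v 0) * (1 - (1 - t / real m * flock_rate) ^ m) / flock_rate"
      using norm_xh_rel_drift_le[of "t / real m"] assms(2,3) by simp
    also have "\<dots> \<le> diam N (v 0) / flock_rate"
      using elim contraction_factor_bounds(1)[of "t / real m"] diam_nonneg[OF N_pos] flock_rate_pos
      by (intro divide_right_mono mult_left_le) auto
    finally show ?case .
  qed
  ultimately show ?thesis
    by (intro tendsto_upperbound) auto
qed

lemma v_drift_le:
  assumes "0 \<le> t" "i < N"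
  shows "norm (v t i - v 0 i) \<le> \<kappa> * diam N (v 0) / flock_rate"
proof (cases "t = 0")
  case True
  then show ?thesis
    using diam_nonneg[OF N_pos, of "v 0"] flock_rate_pos kappa by simp
next
  case False
  with assms have t: "0 < t" by simp
  let ?V = "\<lambda>m. vh (t / real m) (x 0) (v 0) m"
  have "(\<lambda>m. norm (?V m i - v 0 i)) \<longlonglongrightarrow> norm (v t i - v 0 i)"
    by (intro tendsto_intros euler_tendsto t assms(2))
  moreover have "\<forall>\<^sub>F m in sequentially. norm (?V m i - v 0 i) \<le> \<kappa> * diam N (v 0) / flock_rate"
    using eventually_admissible_step[OF t]
  proof eventually_elim
    case (elim m)
    then have "norm (?V m i - v 0 i)
        \<le> \<kappa> * diam N (v 0) * (1 - (1 - t / real m * flock_rate) ^ m) / flock_rate"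
      using norm_vh_diff_le[of "t / real m" i 0 m] assms(2) by simp
    also have "\<dots> \<le> \<kappa> * diam N (v 0) / flock_rate"
      using elim contraction_factor_bounds(1)[of "t / real m"] diam_nonneg[OF N_pos, of "v 0"]
        flock_rate_pos kappa
      by (intro divide_right_mono mult_left_le) auto
    finally show ?case .
  qed
  ultimately show ?thesis
    by (intro tendsto_upperbound) auto
qed

lemma mt_solution_shift:
  assumes "0 \<le> s"
  shows "mt_solution N \<kappa> c1 c2 La a (\<lambda>r. x (s + r)) (\<lambda>r. v (s + r))"
proof (intro mt_solution.intro mt_model_axioms mt_solution_axioms.intro allI impI conjI)
  fix t :: real and i assume t: "0 \<le> t" and i: "i < N"
  have shift: "((\<lambda>r. s + r) has_vector_derivative 1) (at t within {0..})"
    by (auto intro!: derivative_eq_intros)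
  have sub: "(\<lambda>r. s + r) ` {0..} \<subseteq> {0..}" and st: "0 \<le> s + t"
    using assms t by auto
  have "((\<lambda>r. x r i) has_vector_derivative v (s + t) i) (at (s + t) within (\<lambda>r. s + r) ` {0..})"
    and "((\<lambda>r. v r i) has_vector_derivative mt_force N \<kappa> a (x (s + t)) (v (s + t)) i)
      (at (s + t) within (\<lambda>r. s + r) ` {0..})"
    using mt_ode st i by (meson has_vector_derivative_within_subset sub)+
  from this[THEN vector_diff_chain_within[OF shift]]
  show "((\<lambda>r. x (s + r) i) has_vector_derivative v (s + t) i) (at t within {0..})"
    and "((\<lambda>r. v (s + r) i) has_vector_derivative mt_force N \<kappa> a (x (s + t)) (v (s + t)) i)
      (at t within {0..})"
    by (simp_all add: o_def)
qed

definition vel_tail :: "real \<Rightarrow> real" where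
  "vel_tail s = \<kappa> * exp (- flock_rate * s) * diam N (v 0) / flock_rate"

lemma vel_tail_eventually_le:
  assumes "0 < e"
  shows "\<forall>\<^sub>F s in at_top. vel_tail s \<le> e"
proof -
  have "LIM s at_top. flock_rate * s :> at_top"
    by (rule filterlim_tendsto_pos_mult_at_top[OF tendsto_const flock_rate_pos filterlim_ident])
  then have "LIM s at_top. - flock_rate * s :> at_bot"
    by (simp add: filterlim_uminus_at_bot)
  then have "((\<lambda>s. exp (- flock_rate * s)) \<longlongrightarrow> 0) at_top"
    by (rule filterlim_compose[OF exp_at_bot])
  then have "((\<lambda>s. \<kappa> * diam N (v 0) / flock_rate * exp (- flock_rate * s)) \<longlongrightarrow> 0) at_top"
    by (rule tendsto_mult_right_zero)
  then have "(vel_tail \<longlongrightarrow> 0) at_top"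
    by (simp add: vel_tail_def[abs_def] ac_simps)
  then show ?thesis
    using order_tendstoD(2)[of vel_tail 0 at_top e] assms by (auto elim: eventually_mono)
qed

lemma norm_v_diff_le_vel_tail:
  assumes "0 \<le> s" "s \<le> t" "i < N"
  shows "norm (v t i - v s i) \<le> vel_tail s"
proof -
  interpret shifted: mt_solution N \<kappa> c1 c2 La a "\<lambda>r. x (s + r)" "\<lambda>r. v (s + r)"
    using assms(1) by (rule mt_solution_shift)
  have "norm (v (s + (t - s)) i - v (s + 0) i) \<le> \<kappa> * diam N (v (s + 0)) / flock_rate"
    using assms by (intro shifted.v_drift_le) auto
  also have "\<dots> \<le> \<kappa> * (exp (- flock_rate * s) * diam N (v 0)) / flock_rate"
    using diam_v_le[OF assms(1)] kappa flock_rate_pos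
    by (intro divide_right_mono mult_left_mono) auto
  finally show ?thesis
    by (simp add: vel_tail_def)
qed

lemma norm_vh_error_le_vel_tail:
  assumes h: "0 < h" "h * \<kappa> \<le> 1" and "m \<le> n" "i < N"
  shows "norm (vh h (x 0) (v 0) n i - v (real n * h) i)
    \<le> norm (vh h (x 0) (v 0) m i - v (real m * h) i) + 2 * vel_tail (real m * h)"
proof -
  let ?r = "1 - h * flock_rate"
  have "norm (vh h (x 0) (v 0) n i - vh h (x 0) (v 0) m i) \<le> \<kappa> * diam N (v 0) * (?r ^ m - ?r ^ n) / flock_rate"
    using h assms(3,4) by (intro norm_vh_diff_le) auto
  also have "\<dots> \<le> \<kappa> * diam N (v 0) * ?r ^ m / flock_rate"
    using contraction_factor_bounds(1)[of h] h kappa diam_nonneg[OF N_pos, of "v 0"] flock_rate_pos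
    by (intro divide_right_mono mult_left_mono) auto
  also have "\<dots> \<le> vel_tail (real m * h)"
    unfolding vel_tail_def
    using contraction_factor_bounds(2)[of h m] h kappa diam_nonneg[OF N_pos, of "v 0"] flock_rate_pos
    by (simp add: divide_right_mono mult_left_mono mult.commute mult.left_commute)
  finally have discrete_tail: "norm (vh h (x 0) (v 0) n i - vh h (x 0) (v 0) m i) \<le> vel_tail (real m * h)" .
  have continuous_tail: "norm (v (real n * h) i - v (real m * h) i) \<le> vel_tail (real m * h)"
    using h assms(3,4) by (intro norm_v_diff_le_vel_tail) (auto intro: mult_right_mono)
  have "norm (vh h (x 0) (v 0) n i - v (real n * h) i)
      = norm ((vh h (x 0) (v 0) m i - v (real m * h) i) + (vh h (x 0) (v 0) n i - vh h (x 0) (v 0) m i)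
        - (v (real n * h) i - v (real m * h) i))"
    by (simp add: algebra_simps)
  also have "\<dots> \<le> norm (vh h (x 0) (v 0) m i - v (real m * h) i)
      + norm (vh h (x 0) (v 0) n i - vh h (x 0) (v 0) m i) + norm (v (real n * h) i - v (real m * h) i)"
    by (rule order_trans[OF norm_triangle_ineq4 add_right_mono[OF norm_triangle_ineq]])
  also have "\<dots> \<le> norm (vh h (x 0) (v 0) m i - v (real m * h) i) + vel_tail (real m * h) + vel_tail (real m * h)"
    using discrete_tail continuous_tail by simp
  finally show ?thesis
    by simp
qed

end

section \<open>Uniform-in-time error bounds\<close>

context mt_solution
begin

lemma xh_rel_error_le:
  assumes h: "0 \<le> h" "h * \<kappa> \<le> 1" and ij: "i < N" "j < N"
  shows "norm ((xh h (x 0) (v 0) n i - xh h (x 0) (v 0) n j) - (x (real n * h) i - x (real n * h) j))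
    \<le> 2 * diam N (v 0) / flock_rate"
proof -
  let ?X = "xh h (x 0) (v 0) n" and ?t = "real n * h"
  have "norm ((?X i - ?X j) - (x 0 i - x 0 j)) \<le> diam N (v 0) * (1 - (1 - h * flock_rate) ^ n) / flock_rate"
    using h ij by (rule norm_xh_rel_drift_le)
  also have "\<dots> \<le> diam N (v 0) / flock_rate"
    using contraction_factor_bounds(1)[OF h] diam_nonneg[OF N_pos, of "v 0"] flock_rate_pos
    by (intro divide_right_mono mult_left_le) auto
  finally have discrete: "norm ((?X i - ?X j) - (x 0 i - x 0 j)) \<le> diam N (v 0) / flock_rate" .
  have continuous: "norm ((x ?t i - x ?t j) - (x 0 i - x 0 j)) \<le> diam N (v 0) / flock_rate"
    using h ij by (intro x_rel_drift_le) auto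
  have "norm ((?X i - ?X j) - (x ?t i - x ?t j))
      = norm (((?X i - ?X j) - (x 0 i - x 0 j)) - ((x ?t i - x ?t j) - (x 0 i - x 0 j)))"
    by simp
  also have "\<dots> \<le> norm ((?X i - ?X j) - (x 0 i - x 0 j)) + norm ((x ?t i - x ?t j) - (x 0 i - x 0 j))"
    by (rule norm_triangle_ineq4)
  also have "\<dots> \<le> diam N (v 0) / flock_rate + diam N (v 0) / flock_rate"
    using discrete continuous by (rule add_mono)
  finally show ?thesis
    by simp
qed

lemma vh_error_le_of_window:
  assumes h: "0 < h" "h < 1" "h * \<kappa> \<le> 1" and "0 \<le> T" "i < N"
    and euler: "\<And>n. real n * h \<le> T \<Longrightarrow> sol_dist (xh h (x 0) (v 0) n) (vh h (x 0) (v 0) n) (real n * h) \<le> \<epsilon>"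
    and tail: "\<And>s. T - 1 \<le> s \<Longrightarrow> vel_tail s \<le> \<epsilon>"
  shows "norm (vh h (x 0) (v 0) n i - v (real n * h) i) \<le> 3 * \<epsilon>"
proof -
  have early: "norm (vh h (x 0) (v 0) k i - v (real k * h) i) \<le> \<epsilon>" if "real k * h \<le> T" for k
    using norm_le_sol_dist(2)[OF \<open>i < N\<close>, where t="real k * h"] euler[OF that] by (rule order_trans)
  have "0 \<le> \<epsilon>"
    using order_trans[OF norm_ge_zero early[of 0]] \<open>0 \<le> T\<close> by simp
  show ?thesis
  proof (cases "real n * h \<le> T")
    case True
    then show ?thesis
      using early[OF True] \<open>0 \<le> \<epsilon>\<close> by simp
  next
    case False
    obtain m where m: "m \<le> n" "T - 1 \<le> real m * h" "real m * h \<le> T"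
      by (rule grid_point_in_window[of h T n]) (use h \<open>0 \<le> T\<close> False in auto)
    have "norm (vh h (x 0) (v 0) n i - v (real n * h) i)
        \<le> norm (vh h (x 0) (v 0) m i - v (real m * h) i) + 2 * vel_tail (real m * h)"
      using h m(1) \<open>i < N\<close> by (intro norm_vh_error_le_vel_tail) auto
    with early[OF m(3)] tail[OF m(2)] show ?thesis
      by linarith
  qed
qed

lemma vh_error_eventually_le:
  assumes "0 < e"
  shows "\<forall>\<^sub>F h in at_right 0. \<forall>n i. i < N \<longrightarrow> norm (vh h (x 0) (v 0) n i - v (real n * h) i) \<le> e"
proof -
  obtain S where S: "\<And>s. S \<le> s \<Longrightarrow> vel_tail s \<le> e / 3"
    using vel_tail_eventually_le[of "e / 3"] assms by (auto simp: eventually_at_top_linorder)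
  define T where "T = max S 0 + 1"
  obtain C where C: "\<And>h n. 0 < h \<Longrightarrow> real n * h \<le> T \<Longrightarrow>
      sol_dist (xh h (x 0) (v 0) n) (vh h (x 0) (v 0) n) (real n * h) \<le> C * h"
    using euler_error_le[of T] by blast
  have "((\<lambda>h. C * h) \<longlongrightarrow> 0) (at_right 0)"
    by (auto intro!: tendsto_eq_intros)
  from order_tendstoD(2)[OF this, of "e / 3"]
  have "\<forall>\<^sub>F h in at_right 0. C * h < e / 3"
    using assms by simp
  with eventually_small_step show ?thesis
  proof eventually_elim
    case (elim h)
    have euler: "sol_dist (xh h (x 0) (v 0) n) (vh h (x 0) (v 0) n) (real n * h) \<le> e / 3"
      if "real n * h \<le> T" for n
    proof -
      have "sol_dist (xh h (x 0) (v 0) n) (vh h (x 0) (v 0) n) (real n * h) \<le> C * h"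
        using C[of h n] that elim by blast
      with elim show ?thesis
        by linarith
    qed
    have tail: "vel_tail s \<le> e / 3" if "T - 1 \<le> s" for s
      using S[of s] that by (simp add: T_def)
    have "norm (vh h (x 0) (v 0) n i - v (real n * h) i) \<le> 3 * (e / 3)" if "i < N" for n i
      using elim that euler tail by (intro vh_error_le_of_window[where T=T]) (auto simp: T_def)
    then show ?case
      by simp
  qed
qed

lemma Limsup_position_error_le:
  "Limsup (at_right 0) (\<lambda>h. SUP n. ereal (frob N (\<lambda>i j.
      delta (xh h (x 0) (v 0) n) i j - delta (x (real n * h)) i j)))
    \<le> ereal (2 * real N / flock_rate * diam N (v 0))"
proof (rule Limsup_SUP_le)
  show "\<forall>\<^sub>F h in at_right 0. \<forall>n. frob N (\<lambda>i j. delta (xh h (x 0) (v 0) n) i j - delta (x (real n * h)) i j)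
      \<le> 2 * real N / flock_rate * diam N (v 0)"
    using eventually_small_step
  proof eventually_elim
    case (elim h)
    have "frob N (\<lambda>i j. delta (xh h (x 0) (v 0) n) i j - delta (x (real n * h)) i j)
        \<le> real N * (2 * diam N (v 0) / flock_rate)" for n
      unfolding delta_def using elim diam_nonneg[OF N_pos, of "v 0"] flock_rate_pos
      by (intro frob_le xh_rel_error_le) auto
    then show ?case
      by (simp add: field_simps)
  qed
qed

lemma Limsup_velocity_error_eq_0:
  "Limsup (at_right 0) (\<lambda>h. SUP n. ereal (cnorm N (\<lambda>i. vh h (x 0) (v 0) n i - v (real n * h) i))) = 0"
proof (rule Limsup_SUP_eq_0)
  fix e :: real assume "0 < e"
  then have "\<forall>\<^sub>F h in at_right 0. \<forall>n i. i < N \<longrightarrow>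
      norm (vh h (x 0) (v 0) n i - v (real n * h) i) \<le> e / sqrt (real N)"
    using N_pos by (intro vh_error_eventually_le) simp
  then show "\<forall>\<^sub>F h in at_right 0. \<forall>n. cnorm N (\<lambda>i. vh h (x 0) (v 0) n i - v (real n * h) i) \<le> e"
  proof eventually_elim
    case (elim h)
    have "cnorm N (\<lambda>i. vh h (x 0) (v 0) n i - v (real n * h) i) \<le> sqrt (real N) * (e / sqrt (real N))" for n
      using elim \<open>0 < e\<close> N_pos by (intro cnorm_le) auto
    then show ?case
      using N_pos by simp
  qed
qed (simp_all add: cnorm_def sum_nonneg)

end

theorem theorem3p10:
  fixes N :: nat and \<kappa> c1 c2 La :: real and a :: "real \<Rightarrow> real"
  assumes N: "N \<ge> 1" and kappa: "\<kappa> > 0"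
    and c1: "0 < c1" and c12: "c1 \<le> c2"
    and a_bounds: "\<And>r. r \<ge> 0 \<Longrightarrow> c1 \<le> a r \<and> a r \<le> c2"
    and La: "La > 0"
    and a_lip: "\<And>r s. r \<ge> 0 \<Longrightarrow> s \<ge> 0 \<Longrightarrow> \<bar>a r - a s\<bar> \<le> La * \<bar>r - s\<bar>"
  shows "\<exists>c0::real. \<forall>(x :: real \<Rightarrow> nat \<Rightarrow> 'v::euclidean_space) (v :: real \<Rightarrow> nat \<Rightarrow> 'v).
     ((\<forall>t\<ge>0. \<forall>i<N.
          ((\<lambda>s. x s i) has_vector_derivative v t i) (at t within {0..}) \<and>
          ((\<lambda>s. v s i) has_vector_derivative mt_force N \<kappa> a (x t) (v t) i) (at t within {0..}))
      \<and> ennreal (diam N (v 0)) \<le> ennreal \<kappa> * (\<integral>\<^sup>+ s\<in>{diam N (x 0)..}. ennreal (a s) \<partial>lborel)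
      \<and> frob N (delta (x 0)) < M_const N La c1 c2
      \<and> frob N (delta (v 0)) < \<kappa> * integral {frob N (delta (x 0)) .. M_const N La c1 c2} (psi N La c1 c2))
     \<longrightarrow>
     Limsup (at_right 0) (\<lambda>h. SUP n. ereal (frob N (\<lambda>i j.
          delta (fst (mt_disc N \<kappa> a h (x 0) (v 0) n)) i j - delta (x (real n * h)) i j)))
        \<le> ereal (c0 * diam N (v 0))
     \<and> Limsup (at_right 0) (\<lambda>h. SUP n. ereal (cnorm N (\<lambda>i.
          snd (mt_disc N \<kappa> a h (x 0) (v 0) n) i - v (real n * h) i))) = 0"
proof -
  interpret mt_model N \<kappa> c1 c2 La a
    using assms by unfold_locales auto
  show ?thesis
  proof (intro exI[of _ "2 * real N / flock_rate"] allI impI, elim conjE)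
    fix x v :: "real \<Rightarrow> nat \<Rightarrow> 'v::euclidean_space"
    assume "\<forall>t\<ge>0. \<forall>i<N. ((\<lambda>s. x s i) has_vector_derivative v t i) (at t within {0..}) \<and>
          ((\<lambda>s. v s i) has_vector_derivative mt_force N \<kappa> a (x t) (v t) i) (at t within {0..})"
    then interpret mt_solution N \<kappa> c1 c2 La a x v
      by unfold_locales
    show "Limsup (at_right 0) (\<lambda>h. SUP n. ereal (frob N (\<lambda>i j.
          delta (fst (mt_disc N \<kappa> a h (x 0) (v 0) n)) i j - delta (x (real n * h)) i j)))
        \<le> ereal (2 * real N / flock_rate * diam N (v 0))
     \<and> Limsup (at_right 0) (\<lambda>h. SUP n. ereal (cnorm N (\<lambda>i.
          snd (mt_disc N \<kappa> a h (x 0) (v 0) n) i - v (real n * h) i))) = 0"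
      using Limsup_position_error_le Limsup_velocity_error_eq_0 by simp
  qed
qed

end
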